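(* Let $n,m$ be positive integers, $\mu_1=\min(n,m)$, $\mu_2=\max(n,m)$. Then \[ P_n^m(g)=W_{\mu_1}(g)\quad\text{for } 0\le g\le \mu_2, \] and \[ P_n^m(g)=W_n(g)+W_m(g)-W_{n+m}(g)\quad\text{for } \mu_2\le g\le n+m . \]
   Context: For positive integers $n,m$ and an integer $s\ge 0$, $P_n^m(s)$ denotes the number of tuples $(x_1,\dots,x_m)$ of non-negative integers satisfying $\sum_{r=1}^m r\,x_r=s$ and $\sum_{r=1}^m x_r\le n$. Equivalently, $P_n^m(s)$ is the coefficient of $t^s$ in the Gaussian polynomial $G(n,m;t)=\frac{\prod_{i=1}^{n+m}(1-t^i)}{\prod_{u=1}^{n}(1-t^u)\prod_{v=1}^{m}(1-t^v)}=\sum_{s=0}^{nm}P_n^m(s)t^s$. For a positive integer $k$ and integer $s\ge0$, $W_k(s)$ denotes the number of partitions of $s$ into parts from $\{1,\dots,k\}$, i.e. the coefficient of $t^s$ in $\prod_{i=1}^k\frac{1}{1-t^i}=\sum_{s\ge0}W_k(s)t^s$; in particular $W_k(0)=1$. *)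

theory Defs
  imports Main
begin

definition P :: "nat \<Rightarrow> nat \<Rightarrow> nat \<Rightarrow> nat" where
  "P n m s = card {x :: nat \<Rightarrow> nat. (\<forall>r. r \<notin> {1..m} \<longrightarrow> x r = 0)
      \<and> (\<Sum>r=1..m. r * x r) = s \<and> (\<Sum>r=1..m. x r) \<le> n}"

definition W :: "nat \<Rightarrow> nat \<Rightarrow> nat" where
  "W k s = card {c :: nat \<Rightarrow> nat. (\<forall>r. r \<notin> {1..k} \<longrightarrow> c r = 0)
      \<and> (\<Sum>r=1..k. r * c r) = s}"

end

theory Submission
  imports Defs
begin

text \<open>Reading \<open>x r\<close> as the multiplicity of the part \<open>r\<close>, \<open>P n m s\<close> counts the partitions of
  \<open>s\<close> into at most \<open>n\<close> parts, each at most \<open>m\<close>, and \<open>W k s = P s k s\<close>. Conjugation of partitions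
  gives \<open>P n m s = P m n s\<close>; here this symmetry is obtained from the two Pascal-type
  recurrences of the Gaussian polynomial (remove one largest part, or remove the first column of
  the Young diagram). For \<open>g \<le> n\<close> the bound on the number of parts is void, which gives the
  first formula. For \<open>max n m \<le> g \<le> n + m\<close>, a partition of \<open>g\<close> with a part larger than \<open>n\<close> has at
  most \<open>g - n \<le> m\<close> parts, so the partitions of \<open>g\<close> with all parts at most \<open>n\<close> together with those
  having at most \<open>m\<close> parts exhaust all partitions of \<open>g\<close>; their intersection is counted by
  \<open>P n m g\<close>, and inclusion-exclusion gives the second formula.\<close>

definition bounded_partitions :: "nat \<Rightarrow> nat \<Rightarrow> nat \<Rightarrow> (nat \<Rightarrow> nat) set" where
  "bounded_partitions n m s = {x. (\<forall>r. r \<notin> {1..m} \<longrightarrow> x r = 0)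
      \<and> (\<Sum>r=1..m. r * x r) = s \<and> (\<Sum>r=1..m. x r) \<le> n}"

lemma P_eq_card: "P n m s = card (bounded_partitions n m s)"
  by (simp add: P_def bounded_partitions_def)

lemma sum_le_weighted_sum:
  fixes x :: "nat \<Rightarrow> nat"
  shows "(\<Sum>r=1..m. x r) \<le> (\<Sum>r=1..m. r * x r)"
  by (rule sum_mono) simp

lemma W_eq_P: "W k s = P s k s"
proof -
  have "(\<Sum>r=1..k. r * c r) = s \<Longrightarrow> (\<Sum>r=1..k. c r) \<le> s" for c :: "nat \<Rightarrow> nat"
    using sum_le_weighted_sum[of c k] by simp
  then show ?thesis unfolding W_def P_def by metis
qed

lemma part_weight_le_size:
  assumes "x \<in> bounded_partitions n m s"
  shows "r * x r \<le> s"
proof (cases "r \<in> {1..m}")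
  case True
  then have "r * x r \<le> (\<Sum>r=1..m. r * x r)" by (intro member_le_sum) auto
  then show ?thesis using assms by (simp add: bounded_partitions_def)
next
  case False
  then show ?thesis using assms by (simp add: bounded_partitions_def)
qed

lemma part_le_size: "x \<in> bounded_partitions n m s \<Longrightarrow> x r \<noteq> 0 \<Longrightarrow> r \<le> s"
proof -
  assume "x \<in> bounded_partitions n m s" "x r \<noteq> 0"
  then have "r \<le> r * x r" "r * x r \<le> s" using part_weight_le_size by simp_all
  then show "r \<le> s" by (rule le_trans)
qed

lemma finite_bounded_partitions: "finite (bounded_partitions n m s)"
proof (rule finite_subset)
  show "bounded_partitions n m s \<subseteq> {x. \<forall>r. (r \<in> {1..m} \<longrightarrow> x r \<in> {0..s}) \<and> (r \<notin> {1..m} \<longrightarrow> x r = 0)}"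
  proof (intro subsetI CollectI allI conjI impI)
    fix x r assume x: "x \<in> bounded_partitions n m s"
    show "x r \<in> {0..s}" if "r \<in> {1..m}"
      using that part_weight_le_size[OF x, of r] by (simp add: le_trans[of "x r" "r * x r"])
    show "x r = 0" if "r \<notin> {1..m}" using that x by (simp add: bounded_partitions_def)
  qed
  show "finite \<dots>" by (rule finite_set_of_finite_funs) auto
qed

lemma bounded_partitions_redundant_count_bound:
  assumes "s \<le> n"
  shows "bounded_partitions n m s = bounded_partitions s m s"
proof -
  have "(\<Sum>r=1..m. x r) \<le> s" if "(\<Sum>r=1..m. r * x r) = s" for x :: "nat \<Rightarrow> nat"
    using sum_le_weighted_sum[of x m] that by simp
  with assms show ?thesis unfolding bounded_partitions_def by (intro Collect_cong) (metis le_trans)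
qed

lemma P_eq_W: "s \<le> n \<Longrightarrow> P n m s = W m s"
  unfolding W_eq_P P_eq_card by (rule arg_cong[OF bounded_partitions_redundant_count_bound])

lemma P_no_parts: "P 0 m s = (if s = 0 then 1 else 0)"
proof -
  have "bounded_partitions 0 m s = (if s = 0 then {\<lambda>_. 0} else {})"
    unfolding bounded_partitions_def by (auto simp: fun_eq_iff) (metis atLeastAtMost_iff)
  then show ?thesis by (simp add: P_eq_card)
qed

lemma P_no_part_sizes: "P n 0 s = (if s = 0 then 1 else 0)"
proof -
  have "bounded_partitions n 0 s = (if s = 0 then {\<lambda>_. 0} else {})"
    unfolding bounded_partitions_def by (auto simp: fun_eq_iff)
  then show ?thesis by (simp add: P_eq_card)
qed

lemma bij_betw_remove_largest_part:
  "bij_betw (\<lambda>x. x(Suc m := x (Suc m) - 1))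
     {x \<in> bounded_partitions (Suc n) (Suc m) (s + Suc m). x (Suc m) \<noteq> 0}
     (bounded_partitions n (Suc m) s)"
    (is "bij_betw ?f ?A ?B")
proof (rule bij_betw_byWitness[where f'="\<lambda>y. y(Suc m := Suc (y (Suc m)))"])
  show "?f ` ?A \<subseteq> ?B"
  proof (intro image_subsetI)
    fix x assume "x \<in> ?A"
    then show "?f x \<in> ?B"
      unfolding bounded_partitions_def by (cases "x (Suc m)") auto
  qed
  show "(\<lambda>y. y(Suc m := Suc (y (Suc m)))) ` ?B \<subseteq> ?A"
    unfolding bounded_partitions_def by auto
qed (auto simp: fun_eq_iff)

lemma sum_atLeast1_atMost_Suc_shift:
  "(\<Sum>r=1..Suc m. h r) = h 1 + (\<Sum>r=1..m. h (Suc r) :: 'a :: comm_monoid_add)"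
  by (simp only: sum.atLeast_Suc_atMost[of 1 "Suc m"] sum.shift_bounds_cl_Suc_ivl)

text \<open>Subtracting 1 from each of the \<open>Suc n\<close> parts shifts the multiplicities down by one place;
  the inverse recovers the number of parts equal to 1 from the total \<open>Suc n\<close>.\<close>

lemma bij_betw_remove_first_column:
  "bij_betw (\<lambda>x r. if r = 0 then 0 else x (Suc r))
     {x \<in> bounded_partitions (Suc n) (Suc m) (s + Suc n). (\<Sum>r=1..Suc m. x r) = Suc n}
     (bounded_partitions (Suc n) m s)"
    (is "bij_betw ?f ?A ?B")
proof (rule bij_betw_byWitness[where f'="\<lambda>y r. if r = 1 then Suc n - (\<Sum>r=1..m. y r) else y (r - 1)"])
  have weight_shift: "(\<Sum>r=1..Suc m. r * x r) = (\<Sum>r=1..Suc m. x r) + (\<Sum>r=1..m. r * x (Suc r))"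
    for x :: "nat \<Rightarrow> nat"
    unfolding sum_atLeast1_atMost_Suc_shift by (simp add: sum.distrib)
  show "?f ` ?A \<subseteq> ?B"
  proof (intro image_subsetI)
    fix x assume x: "x \<in> ?A"
    have "(\<Sum>r=1..m. ?f x r) \<le> (\<Sum>r=1..Suc m. x r)"
      unfolding sum_atLeast1_atMost_Suc_shift by simp
    with x show "?f x \<in> ?B"
      using weight_shift[of x] unfolding bounded_partitions_def by auto
  qed
  show "(\<lambda>y r. if r = 1 then Suc n - (\<Sum>r=1..m. y r) else y (r - 1)) ` ?B \<subseteq> ?A"
  proof (intro image_subsetI)
    fix y assume y: "y \<in> ?B"
    define x where "x = (\<lambda>r. if r = 1 then Suc n - (\<Sum>r=1..m. y r) else y (r - 1))"
    have "x r = 0" if "r \<notin> {1..Suc m}" for r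
      using y that by (cases r) (auto simp: x_def bounded_partitions_def)
    moreover have parts: "(\<Sum>r=1..Suc m. x r) = Suc n"
      using y unfolding sum_atLeast1_atMost_Suc_shift by (simp add: x_def bounded_partitions_def)
    moreover have "(\<Sum>r=1..Suc m. r * x r) = s + Suc n"
      using y unfolding weight_shift[of x] parts by (simp add: x_def bounded_partitions_def)
    ultimately show "x \<in> ?A" unfolding bounded_partitions_def by auto
  qed
  show "\<forall>x\<in>?A. (\<lambda>r. if r = 1 then Suc n - (\<Sum>r=1..m. ?f x r) else ?f x (r - 1)) = x"
  proof
    fix x assume "x \<in> ?A"
    then have "x 1 + (\<Sum>r=1..m. x (Suc r)) = Suc n" and "x 0 = 0"
      unfolding sum_atLeast1_atMost_Suc_shift by (auto simp: bounded_partitions_def)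
    then show "(\<lambda>r. if r = 1 then Suc n - (\<Sum>r=1..m. ?f x r) else ?f x (r - 1)) = x"
      by (auto simp: fun_eq_iff le_Suc_eq)
  qed
qed (auto simp: fun_eq_iff bounded_partitions_def)

lemma card_split_by_predicate:
  "finite A \<Longrightarrow> card A = card {x \<in> A. Q x} + card {x \<in> A. \<not> Q x}"
  using card_Int_Diff[of A "{x. Q x}"] by (simp add: Int_def set_diff_eq)

lemma P_Suc_Suc_largest_part:
  "P (Suc n) (Suc m) s = P (Suc n) m s + (if Suc m \<le> s then P n (Suc m) (s - Suc m) else 0)"
proof -
  let ?A = "bounded_partitions (Suc n) (Suc m) s"
  have "{x \<in> ?A. x (Suc m) = 0} = bounded_partitions (Suc n) m s"
    unfolding bounded_partitions_def by (auto simp: le_Suc_eq)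
  moreover have "card {x \<in> ?A. x (Suc m) \<noteq> 0} = (if Suc m \<le> s then P n (Suc m) (s - Suc m) else 0)"
  proof (cases "Suc m \<le> s")
    case True
    then obtain s' where "s = s' + Suc m" using le_Suc_ex by (metis add.commute)
    then show ?thesis
      using bij_betw_same_card[OF bij_betw_remove_largest_part[of m n s']] by (simp add: P_eq_card)
  next
    case False
    then have "{x \<in> ?A. x (Suc m) \<noteq> 0} = {}" using part_le_size by blast
    with False show ?thesis by (simp only: card.empty) simp
  qed
  ultimately show ?thesis
    using card_split_by_predicate[OF finite_bounded_partitions, of _ _ _ "\<lambda>x. x (Suc m) = 0"]
    by (simp add: P_eq_card)
qed

lemma P_Suc_Suc_num_parts:
  "P (Suc n) (Suc m) s = P n (Suc m) s + (if Suc n \<le> s then P (Suc n) m (s - Suc n) else 0)"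
proof -
  let ?A = "bounded_partitions (Suc n) (Suc m) s"
  have "{x \<in> ?A. (\<Sum>r=1..Suc m. x r) \<noteq> Suc n} = bounded_partitions n (Suc m) s"
    unfolding bounded_partitions_def by auto
  moreover have "card {x \<in> ?A. (\<Sum>r=1..Suc m. x r) = Suc n} = (if Suc n \<le> s then P (Suc n) m (s - Suc n) else 0)"
  proof (cases "Suc n \<le> s")
    case True
    then obtain s' where "s = s' + Suc n" using le_Suc_ex by (metis add.commute)
    then show ?thesis
      using bij_betw_same_card[OF bij_betw_remove_first_column[of n m s']] by (simp add: P_eq_card)
  next
    case False
    have "(\<Sum>r=1..Suc m. x r) \<le> s" if "x \<in> ?A" for x
      using that sum_le_weighted_sum[of x "Suc m"] by (simp add: bounded_partitions_def)
    with False have "{x \<in> ?A. (\<Sum>r=1..Suc m. x r) = Suc n} = {}" by fastforce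
    with False show ?thesis by (simp only: card.empty) simp
  qed
  ultimately show ?thesis
    using card_split_by_predicate[OF finite_bounded_partitions, of _ _ _ "\<lambda>x. (\<Sum>r=1..Suc m. x r) = Suc n"]
    by (simp add: P_eq_card)
qed

lemma P_commute: "P n m s = P m n s"
proof (induction "n + m" arbitrary: n m s rule: less_induct)
  case less
  show ?case
  proof (cases "n = 0 \<or> m = 0")
    case True
    then show ?thesis by (auto simp: P_no_parts P_no_part_sizes)
  next
    case False
    then obtain n' m' where nm: "n = Suc n'" "m = Suc m'" by (metis not0_implies_Suc)
    have "P n m s = P (Suc n') m' s + (if Suc m' \<le> s then P n' (Suc m') (s - Suc m') else 0)"
      unfolding nm by (rule P_Suc_Suc_largest_part)
    also have "\<dots> = P m' (Suc n') s + (if Suc m' \<le> s then P (Suc m') n' (s - Suc m') else 0)"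
      using less.hyps nm by simp
    also have "\<dots> = P m n s"
      unfolding nm by (rule P_Suc_Suc_num_parts[symmetric])
    finally show ?thesis .
  qed
qed

lemma W_eq_W_size: "s \<le> k \<Longrightarrow> W k s = W s s"
  using W_eq_P[of k s] P_commute[of s k s] P_eq_W[of s k s] by simp

lemma mem_bounded_partitions_iff:
  assumes "m \<le> N"
  shows "x \<in> bounded_partitions n m s \<longleftrightarrow> (\<forall>r. r \<notin> {1..m} \<longrightarrow> x r = 0)
           \<and> (\<Sum>r=1..N. r * x r) = s \<and> (\<Sum>r=1..N. x r) \<le> n"
proof -
  have "(\<Sum>r=1..N. h r * x r) = (\<Sum>r=1..m. h r * x r)"
    if "\<forall>r. r \<notin> {1..m} \<longrightarrow> x r = 0" for h :: "nat \<Rightarrow> nat"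
    using assms that by (intro sum.mono_neutral_right) auto
  from this[of id] this[of "\<lambda>_. 1"] show ?thesis
    unfolding bounded_partitions_def by auto
qed

lemma bounded_partitions_Int:
  "bounded_partitions n m s \<inter> bounded_partitions n' m' s
     = bounded_partitions (min n n') (min m m') s"
  using mem_bounded_partitions_iff[of m "max m m'"] mem_bounded_partitions_iff[of m' "max m m'"]
    mem_bounded_partitions_iff[of "min m m'" "max m m'"]
  by auto

lemma num_parts_add_part_le:
  assumes x: "x \<in> bounded_partitions n m s" and "x k \<noteq> 0"
  shows "(\<Sum>r=1..m. x r) + k \<le> Suc s"
proof -
  have k: "k \<in> {1..m}" using assms by (auto simp: bounded_partitions_def)
  have "k - 1 \<le> (k - 1) * x k" using \<open>x k \<noteq> 0\<close> by simp
  also have "\<dots> \<le> (\<Sum>r=1..m. (r - 1) * x r)" using k by (intro member_le_sum) auto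
  finally have "(\<Sum>r=1..m. x r) + (k - 1) \<le> (\<Sum>r=1..m. x r + (r - 1) * x r)"
    by (simp add: sum.distrib)
  also have "\<dots> = (\<Sum>r=1..m. r * x r)"
    by (intro sum.cong) (auto simp: algebra_simps)
  finally show ?thesis using k x by (simp add: bounded_partitions_def)
qed

lemma bounded_partitions_Un:
  assumes "n \<le> s" "m \<le> s" "s \<le> n + m"
  shows "bounded_partitions s n s \<union> bounded_partitions m s s = bounded_partitions s s s"
proof (intro equalityI)
  show "bounded_partitions s n s \<union> bounded_partitions m s s \<subseteq> bounded_partitions s s s"
    using assms bounded_partitions_Int[of s n s s s] bounded_partitions_Int[of m s s s s] by auto
next
  show "bounded_partitions s s s \<subseteq> bounded_partitions s n s \<union> bounded_partitions m s s"
  proof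
    fix x assume x: "x \<in> bounded_partitions s s s"
    show "x \<in> bounded_partitions s n s \<union> bounded_partitions m s s"
    proof (cases "\<exists>k>n. x k \<noteq> 0")
      case True
      then obtain k where "n < k" "x k \<noteq> 0" by blast
      then have "(\<Sum>r=1..s. x r) \<le> m" using num_parts_add_part_le[OF x] assms(3) by fastforce
      with x have "x \<in> bounded_partitions m s s" by (simp add: bounded_partitions_def)
      then show ?thesis ..
    next
      case False
      with x have "x \<in> bounded_partitions s n s"
        using mem_bounded_partitions_iff[of n s] mem_bounded_partitions_iff[of s s] assms(1)
        by (auto simp: not_less)
      then show ?thesis ..
    qed
  qed
qed

theorem theorem2:
  fixes n m :: nat
  assumes "n > 0" and "m > 0"
  shows "(\<forall>g. g \<le> max n m \<longrightarrow> P n m g = W (min n m) g)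
       \<and> (\<forall>g. max n m \<le> g \<and> g \<le> n + m \<longrightarrow>
            int (P n m g) = int (W n g) + int (W m g) - int (W (n + m) g))"
proof (intro conjI allI impI)
  fix g assume "g \<le> max n m"
  then show "P n m g = W (min n m) g"
    using P_eq_W[of g n m] P_eq_W[of g m n] P_commute[of n m g] by (cases "m \<le> n") auto
next
  fix g assume g: "max n m \<le> g \<and> g \<le> n + m"
  let ?A = "bounded_partitions g n g" and ?B = "bounded_partitions m g g"
  have "card ?A + card ?B = card (?A \<union> ?B) + card (?A \<inter> ?B)"
    by (rule card_Un_Int) (rule finite_bounded_partitions)+
  moreover have "?A \<union> ?B = bounded_partitions g g g" using g by (intro bounded_partitions_Un) auto
  moreover have "?A \<inter> ?B = bounded_partitions m n g" using g by (simp add: bounded_partitions_Int)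
  moreover have "W (n + m) g = P g g g" using g W_eq_W_size[of g "n + m"] W_eq_P[of g g] by simp
  ultimately have "W n g + W m g = W (n + m) g + P n m g"
    using W_eq_P[of n g] W_eq_P[of m g] P_commute[of g m g] P_commute[of m n g] by (simp add: P_eq_card)
  then show "int (P n m g) = int (W n g) + int (W m g) - int (W (n + m) g)" by simp
qed

end
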